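(* For every $n\ge 4$, with $m=\lfloor (n-3)/4\rfloor$, the following set $Z$ of $(m+1)^2$ pyramidal tours yields pairwise adjacent vertices of $\mathrm{PYR}(n)$: for each pair $(q,s)$ with $0\le q,s\le m$, let $x=x_{q,s}$ be the pyramidal tour whose code satisfies $x^c_{2i+1}=1$, $x^c_{2i+2}=0$ for $1\le i\le q$; $x^c_{4m-2j+3}=0$, $x^c_{4m-2j+4}=1$ for $1\le j\le s$; $x^c_k=1$ for all $k$ with $4m+3\le k\le n-1$; and all remaining coordinates of $x^c$ equal to $0$. Consequently $\omega(\mathrm{PYR}(n))\ge \left(\lfloor (n-3)/4\rfloor+1\right)^2$.
   Context: Let $K_n$ be the complete undirected graph on vertex set $\{1,\dots,n\}$ with edge set $E$. A Hamiltonian cycle $\langle 1,i_1,\dots,i_r,n,j_1,\dots,j_{n-r-2}\rangle$ is called a pyramidal tour if $i_1<i_2<\dots<i_r$ and $j_1>j_2>\dots>j_{n-r-2}$; tours are undirected. Let $PT_n$ be the set of all pyramidal tours. For $x\in PT_n$ its characteristic vector $x^v\in\mathbb{R}^E$ has $x^v_e=1$ if edge $e$ lies in $x$ and $0$ otherwise. The pyramidal tours polytope is $\mathrm{PYR}(n)=\operatorname{conv}\{x^v : x\in PT_n\}$. Every pyramidal tour contains the edge $\{1,2\}$; the tour is oriented so that vertex $2$ belongs to the increasing part. The code of $x$ is the $0/1$ vector $x^c=(x^c_3,\dots,x^c_{n-1})$ (indexed by $3,\dots,n-1$) with $x^c_i=1$ if vertex $i$ is visited in the increasing part of $x$ and $x^c_i=0$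 otherwise; $x\mapsto x^c$ is a bijection from $PT_n$ onto $\{0,1\}^{n-3}$. The skeleton of a polytope is the graph on its vertices whose edges are its one-dimensional faces; $\omega(\mathrm{PYR}(n))$ is the clique number of the skeleton of $\mathrm{PYR}(n)$. *)

theory Defs
  imports "HOL-Analysis.Analysis" "HOL-Library.Function_Algebras"
begin

instantiation "fun" :: (type, real_vector) real_vector
begin
definition scaleR_fun :: "real \<Rightarrow> ('a \<Rightarrow> 'b) \<Rightarrow> 'a \<Rightarrow> 'b" where
  "scaleR_fun r f = (\<lambda>x. r *\<^sub>R f x)"
instance
  by standard (auto simp: scaleR_fun_def fun_eq_iff scaleR_add_right scaleR_add_left)
end

definition Kn_edges :: "nat \<Rightarrow> nat set set" where
  "Kn_edges n = {{i, j} | i j. i \<in> {1..n} \<and> j \<in> {1..n} \<and> i \<noteq> j}"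

definition cycle_edges :: "nat list \<Rightarrow> nat set set" where
  "cycle_edges xs = {{xs ! k, xs ! ((k + 1) mod length xs)} | k. k < length xs}"

definition pyramidal_seq :: "nat \<Rightarrow> nat list \<Rightarrow> bool" where
  "pyramidal_seq n xs \<longleftrightarrow> distinct xs \<and> set xs = {1..n} \<and>
     (\<exists>is js. xs = 1 # is @ n # js \<and> sorted_wrt (<) is \<and> sorted_wrt (>) js)"

definition PT :: "nat \<Rightarrow> nat set set set" where
  "PT n = {cycle_edges xs | xs. pyramidal_seq n xs}"

text \<open>Characteristic vector in R^E (coordinates outside E are 0).\<close>
definition charvec :: "nat set set \<Rightarrow> (nat set \<Rightarrow> real)" where
  "charvec T = (\<lambda>e. if e \<in> T then 1 else 0)"

definition PYR :: "nat \<Rightarrow> (nat set \<Rightarrow> real) set" where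
  "PYR n = convex hull (charvec ` PT n)"

text \<open>The pyramidal tour with code c (c i = True iff vertex i, 3 <= i <= n-1, lies in the
  increasing part; the tour is oriented so that 2 is in the increasing part).\<close>
definition tour_of_code :: "nat \<Rightarrow> (nat \<Rightarrow> bool) \<Rightarrow> nat set set" where
  "tour_of_code n c = cycle_edges
     (1 # (2 # filter c [3..<n]) @ n # rev (filter (\<lambda>i. \<not> c i) [3..<n]))"

definition vertices_of :: "'a::real_vector set \<Rightarrow> 'a set" where
  "vertices_of P = {v. v extreme_point_of P}"

definition skel_adjacent :: "'a::real_vector set \<Rightarrow> 'a \<Rightarrow> 'a \<Rightarrow> bool" where
  "skel_adjacent P u v \<longleftrightarrow> u \<in> vertices_of P \<and> v \<in> vertices_of P \<and> u \<noteq> v \<and>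
     closed_segment u v face_of P"

definition skel_clique :: "'a::real_vector set \<Rightarrow> 'a set \<Rightarrow> bool" where
  "skel_clique P C \<longleftrightarrow> C \<subseteq> vertices_of P \<and> (\<forall>u\<in>C. \<forall>v\<in>C. u \<noteq> v \<longrightarrow> skel_adjacent P u v)"

definition clique_number :: "'a::real_vector set \<Rightarrow> nat" where
  "clique_number P = Max {card C | C. finite C \<and> skel_clique P C}"

definition code_qs :: "nat \<Rightarrow> nat \<Rightarrow> nat \<Rightarrow> nat \<Rightarrow> bool" where
  "code_qs m q s k \<longleftrightarrow>
     (\<exists>i\<in>{1..q}. k = 2*i + 1) \<or> (\<exists>j\<in>{1..s}. k = 4*m + 4 - 2*j) \<or> 4*m + 3 \<le> k"

end

theory Submission
  imports Defs
begin

text \<open>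
  A pyramidal tour is the union of two increasing paths from \<open>1\<close> to \<open>n\<close>, so it is determined
  by the set \<open>I\<close> of inner vertices on one of them, or by its switches: the \<open>k\<close> for which \<open>k\<close>
  and \<open>k + 1\<close> lie on different paths. The edges \<open>{k, k + 1}\<close>, \<open>{k, k + 2}\<close> and the long edges
  leaving \<open>v\<close> upwards or entering \<open>u + 2\<close> from below are read off locally from the switches.

  Two vertices \<open>charvec x\<close>, \<open>charvec y\<close> of a 0/1-polytope are adjacent as soon as every tour
  \<open>T\<close> with \<open>x \<inter> y \<subseteq> T \<subseteq> x \<union> y\<close> is \<open>x\<close> or \<open>y\<close>. For \<open>x = x\<^sub>q\<^sub>,\<^sub>s\<close> and
  \<open>y = x\<^sub>q\<^sub>'\<^sub>,\<^sub>s\<^sub>'\<close> the switches form a single run in the left half \<open>{2..2m+1}\<close> and a single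
  run in the right half \<open>{2m+2..n-2}\<close>. The local edge criteria force the switches of \<open>T\<close> to
  agree with those of \<open>x\<close> or of \<open>y\<close> on each half, so \<open>T\<close> is one of \<open>x\<^sub>q\<^sub>,\<^sub>s\<close>,
  \<open>x\<^sub>q\<^sub>'\<^sub>,\<^sub>s\<^sub>'\<close>, \<open>x\<^sub>q\<^sub>,\<^sub>s\<^sub>'\<close>, \<open>x\<^sub>q\<^sub>'\<^sub>,\<^sub>s\<close>; the mixed ones are excluded because
  their jump edge from the left to the right half lies in neither \<open>x\<close> nor \<open>y\<close>.
\<close>

section \<open>Faces cut out by a linear functional\<close>

lemma convex_linear_level:
  fixes \<phi> :: "'a::real_vector \<Rightarrow> real"
  assumes "linear \<phi>"
  shows "convex {x. \<phi> x = b}" "convex {x. \<phi> x \<le> b}"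
  using convex_linear_vimage[OF assms convex_singleton[of b]]
    convex_linear_vimage[OF assms convex_real_interval(2)[of b]] by (simp_all add: vimage_def)

lemma face_of_Int_linear_level:
  fixes \<phi> :: "'a::real_vector \<Rightarrow> real"
  assumes "convex S" "linear \<phi>" "\<And>x. x \<in> S \<Longrightarrow> \<phi> x \<le> b"
  shows "S \<inter> {x. \<phi> x = b} face_of S"
  unfolding face_of_def
proof (intro conjI ballI impI)
  show "convex (S \<inter> {x. \<phi> x = b})"
    using assms(1) convex_linear_level(1)[OF assms(2)] by (rule convex_Int)
  fix a c x
  assume a: "a \<in> S" and c: "c \<in> S" and x: "x \<in> S \<inter> {x. \<phi> x = b}" and "x \<in> open_segment a c"
  then obtain u where u: "0 < u" "u < 1" "x = (1 - u) *\<^sub>R a + u *\<^sub>R c"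
    unfolding in_segment by blast
  then have "\<phi> x = (1 - u) * \<phi> a + u * \<phi> c"
    using linear_add[OF assms(2)] linear_scale[OF assms(2)] by simp
  then have "(1 - u) * (b - \<phi> a) + u * (b - \<phi> c) = 0"
    using x by (simp add: algebra_simps)
  moreover have "0 \<le> (1 - u) * (b - \<phi> a)" "0 \<le> u * (b - \<phi> c)"
    using u assms(3) a c by simp_all
  ultimately have "\<phi> a = b" "\<phi> c = b"
    using u by (simp_all add: add_nonneg_eq_0_iff)
  then show "a \<in> S \<inter> {x. \<phi> x = b}" "c \<in> S \<inter> {x. \<phi> x = b}"
    using a c by simp_all
qed (rule Int_lower1)

lemma convex_combination_weights_off_level:
  fixes \<phi> :: "'a::real_vector \<Rightarrow> real"
  assumes "finite V" "linear \<phi>" "\<And>v. v \<in> V \<Longrightarrow> \<phi> v \<le> b"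
    and "\<forall>v\<in>V. 0 \<le> u v" "sum u V = 1" "\<phi> (\<Sum>v\<in>V. u v *\<^sub>R v) = b"
  shows "\<forall>v\<in>V. \<phi> v \<noteq> b \<longrightarrow> u v = 0"
proof -
  have "\<phi> (\<Sum>v\<in>V. u v *\<^sub>R v) = (\<Sum>v\<in>V. \<phi> (u v *\<^sub>R v))"
    by (rule linear_sum[OF assms(2)])
  then have \<phi>: "(\<Sum>v\<in>V. u v * \<phi> v) = b"
    using linear_scale[OF assms(2)] assms(6) by simp
  have "(\<Sum>v\<in>V. u v * (b - \<phi> v)) = (\<Sum>v\<in>V. u v * b) - (\<Sum>v\<in>V. u v * \<phi> v)"
    by (simp add: right_diff_distrib sum_subtractf)
  also have "\<dots> = 0"
    using assms(5) \<phi> by (simp add: sum_distrib_right[symmetric])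
  finally have "(\<Sum>v\<in>V. u v * (b - \<phi> v)) = 0" .
  moreover have nonneg: "0 \<le> u v * (b - \<phi> v)" if "v \<in> V" for v
    using that assms(3,4) by simp
  ultimately have "\<forall>v\<in>V. u v * (b - \<phi> v) = 0"
    using sum_nonneg_eq_0_iff[OF assms(1) nonneg] by simp
  then show ?thesis
    by auto
qed

lemma convex_hull_Int_linear_level:
  fixes \<phi> :: "'a::real_vector \<Rightarrow> real"
  assumes "finite V" "linear \<phi>" "\<And>v. v \<in> V \<Longrightarrow> \<phi> v \<le> b"
  shows "convex hull V \<inter> {x. \<phi> x = b} = convex hull {v\<in>V. \<phi> v = b}"
proof
  let ?W = "{v\<in>V. \<phi> v = b}"
  show "convex hull V \<inter> {x. \<phi> x = b} \<subseteq> convex hull ?W"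
  proof
    fix x assume "x \<in> convex hull V \<inter> {x. \<phi> x = b}"
    then obtain u where u: "\<forall>v\<in>V. 0 \<le> u v" "sum u V = 1" "(\<Sum>v\<in>V. u v *\<^sub>R v) = x" "\<phi> x = b"
      unfolding convex_hull_finite[OF assms(1)] by blast
    have "\<phi> (\<Sum>v\<in>V. u v *\<^sub>R v) = b"
      using u(3,4) by simp
    then have "\<forall>v\<in>V. \<phi> v \<noteq> b \<longrightarrow> u v = 0"
      using convex_combination_weights_off_level[OF assms u(1,2)] by blast
    then have zero: "\<forall>v\<in>V - ?W. u v = 0"
      by auto
    have "sum u ?W = sum u V" "(\<Sum>v\<in>?W. u v *\<^sub>R v) = (\<Sum>v\<in>V. u v *\<^sub>R v)"
      by (rule sum.mono_neutral_left[OF assms(1)]; use zero in auto)+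
    then have "sum u ?W = 1" "(\<Sum>v\<in>?W. u v *\<^sub>R v) = x"
      using u(2,3) by simp_all
    moreover have "finite ?W"
      using assms(1) by simp
    ultimately show "x \<in> convex hull ?W"
      unfolding convex_hull_finite[OF \<open>finite ?W\<close>] using u(1) by blast
  qed
  have "convex (convex hull V \<inter> {x. \<phi> x = b})"
    using convex_convex_hull convex_linear_level(1)[OF assms(2)] by (rule convex_Int)
  then show "convex hull ?W \<subseteq> convex hull V \<inter> {x. \<phi> x = b}"
    by (rule hull_minimal[rotated]) (auto intro: hull_inc)
qed

lemma face_of_convex_hull_linear_level:
  fixes \<phi> :: "'a::real_vector \<Rightarrow> real"
  assumes "finite V" "linear \<phi>" "\<And>v. v \<in> V \<Longrightarrow> \<phi> v \<le> b"
  shows "convex hull {v\<in>V. \<phi> v = b} face_of convex hull V"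
proof -
  have "convex hull V \<subseteq> {x. \<phi> x \<le> b}"
    using assms(3) convex_linear_level(2)[OF assms(2)] by (intro hull_minimal) auto
  then have "convex hull V \<inter> {x. \<phi> x = b} face_of convex hull V"
    using face_of_Int_linear_level[OF convex_convex_hull assms(2), of V b] by blast
  then show ?thesis
    using convex_hull_Int_linear_level[OF assms] by simp
qed

section \<open>Paths and pyramidal tours\<close>

definition consecutive_in :: "(nat \<Rightarrow> bool) \<Rightarrow> nat \<Rightarrow> nat \<Rightarrow> bool" where
  "consecutive_in P i j \<longleftrightarrow> i < j \<and> P i \<and> P j \<and> (\<forall>k. i < k \<and> k < j \<longrightarrow> \<not> P k)"

lemma consecutive_in_cong:
  assumes "\<And>k. i \<le> k \<Longrightarrow> k \<le> j \<Longrightarrow> P k \<longleftrightarrow> Q k"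
  shows "consecutive_in P i j \<longleftrightarrow> consecutive_in Q i j"
  using assms unfolding consecutive_in_def by (metis less_imp_le_nat order_refl)

lemma consecutive_in_Suc: "consecutive_in P k (Suc k) \<longleftrightarrow> P k \<and> P (Suc k)"
  unfolding consecutive_in_def by auto

lemma consecutive_in_Suc_Suc:
  "consecutive_in P k (Suc (Suc k)) \<longleftrightarrow> P k \<and> \<not> P (Suc k) \<and> P (Suc (Suc k))"
  unfolding consecutive_in_def by (auto simp: less_Suc_eq)

lemma consecutive_in_between: "consecutive_in P i j \<Longrightarrow> i < k \<Longrightarrow> k < j \<Longrightarrow> \<not> P k"
  unfolding consecutive_in_def by blast

lemma consecutive_in_exists_above:
  assumes "P v" "v < L" "L \<le> b" "P b" "\<And>k. v < k \<Longrightarrow> k < L \<Longrightarrow> \<not> P k"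
  shows "\<exists>j. L \<le> j \<and> j \<le> b \<and> consecutive_in P v j"
proof -
  define j where "j = (LEAST j. L \<le> j \<and> P j)"
  have j: "L \<le> j" "P j" "j \<le> b"
    using LeastI[of "\<lambda>j. L \<le> j \<and> P j" b] Least_le[of "\<lambda>j. L \<le> j \<and> P j" b] assms(3,4)
    unfolding j_def by auto
  have "\<not> P k" if "v < k" "k < j" for k
    using assms(5) not_less_Least[of k "\<lambda>j. L \<le> j \<and> P j"] that unfolding j_def by fastforce
  then show ?thesis
    using j assms(1,2) unfolding consecutive_in_def by (intro exI[of _ j]) auto
qed

lemma consecutive_in_exists_below:
  assumes "P v" "L < v" "a \<le> L" "P a" "\<And>k. L < k \<Longrightarrow> k < v \<Longrightarrow> \<not> P k"
  shows "\<exists>j. a \<le> j \<and> j \<le> L \<and> consecutive_in P j v"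
proof -
  define j where "j = (GREATEST j. j \<le> L \<and> P j)"
  have j: "j \<le> L" "P j" "a \<le> j"
    using GreatestI_nat[of "\<lambda>j. j \<le> L \<and> P j" a L] Greatest_le_nat[of "\<lambda>j. j \<le> L \<and> P j" a L]
      assms(3,4) unfolding j_def by auto
  have "\<not> P k" if "j < k" "k < v" for k
  proof (cases "k \<le> L")
    case True
    then show ?thesis
      using Greatest_le_nat[of "\<lambda>j. j \<le> L \<and> P j" k L] that(1) unfolding j_def by auto
  qed (use assms(5) that in auto)
  then show ?thesis
    using j assms(1,2) unfolding consecutive_in_def by (intro exI[of _ j]) auto
qed

lemma consecutive_in_insert_min:
  assumes "x < y" "P y" "\<And>k. P k \<Longrightarrow> y \<le> k"
  shows "consecutive_in (\<lambda>k. k = x \<or> P k) a b \<longleftrightarrow> (a = x \<and> b = y) \<or> consecutive_in P a b"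
proof
  assume c: "consecutive_in (\<lambda>k. k = x \<or> P k) a b"
  show "(a = x \<and> b = y) \<or> consecutive_in P a b"
  proof (cases "a = x")
    case True
    have "\<not> b < y" "\<not> y < b" using c assms True unfolding consecutive_in_def by force+
    then show ?thesis using True by simp
  next
    case False
    then show ?thesis using c assms(1,3) unfolding consecutive_in_def by force
  qed
next
  assume "(a = x \<and> b = y) \<or> consecutive_in P a b"
  then show "consecutive_in (\<lambda>k. k = x \<or> P k) a b"
    using assms unfolding consecutive_in_def by (force simp: not_le[symmetric])
qed

fun path_edges :: "'a list \<Rightarrow> 'a set set" where
  "path_edges [] = {}"
| "path_edges [x] = {}"
| "path_edges (x # y # zs) = insert {x, y} (path_edges (y # zs))"

lemma path_edges_conv_nth: "path_edges xs = (\<lambda>k. {xs ! k, xs ! Suc k}) ` {..<length xs - 1}"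
proof (induction xs rule: path_edges.induct)
  case (3 x y zs)
  then show ?case by (simp add: lessThan_Suc_eq_insert_0 image_image)
qed auto

lemma cycle_edges_eq_path_edges:
  assumes "xs \<noteq> []"
  shows "cycle_edges xs = insert {last xs, hd xs} (path_edges xs)"
proof -
  let ?e = "\<lambda>k. {xs ! k, xs ! ((k + 1) mod length xs)}"
  have "cycle_edges xs = ?e ` {..<Suc (length xs - 1)}"
    unfolding cycle_edges_def using assms by auto
  also have "\<dots> = insert (?e (length xs - 1)) (?e ` {..<length xs - 1})"
    by (simp only: lessThan_Suc image_insert)
  also have "?e (length xs - 1) = {last xs, hd xs}"
    using assms by (simp add: last_conv_nth hd_conv_nth)
  also have "?e ` {..<length xs - 1} = path_edges xs"
    unfolding path_edges_conv_nth by (rule image_cong) auto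
  finally show ?thesis .
qed

lemma path_edges_append:
  "xs \<noteq> [] \<Longrightarrow> ys \<noteq> [] \<Longrightarrow> path_edges (xs @ ys) = insert {last xs, hd ys} (path_edges xs \<union> path_edges ys)"
proof (induction xs rule: path_edges.induct)
  case (2 x) then show ?case by (cases ys) auto
qed auto

lemma path_edges_rev: "path_edges (rev xs) = path_edges xs"
proof (induction xs rule: path_edges.induct)
  case (3 x y zs)
  have "path_edges (rev (x # y # zs)) = insert {y, x} (path_edges (rev (y # zs)))"
    using path_edges_append[of "rev (y # zs)" "[x]"] by (simp add: last_rev)
  with "3.IH" show ?case by (simp add: insert_commute)
qed auto

lemma cycle_edges_split:
  "cycle_edges (a # xs @ b # ys) = path_edges (a # xs @ [b]) \<union> path_edges (a # rev ys @ [b])"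
proof -
  have "path_edges (a # rev ys @ [b]) = path_edges (b # ys @ [a])"
    using path_edges_rev[of "b # ys @ [a]"] by simp
  then show ?thesis
    using path_edges_append[of "a # xs" "b # ys"] path_edges_append[of "a # xs" "[b]"]
      path_edges_append[of "b # ys" "[a]"]
    by (auto simp: cycle_edges_eq_path_edges insert_commute)
qed

lemma path_edges_sorted:
  "sorted_wrt (<) xs \<Longrightarrow> path_edges xs = {{a, b} | a b. consecutive_in (\<lambda>k. k \<in> set xs) a b}"
proof (induction xs rule: path_edges.induct)
  case (3 x y zs)
  have "y \<le> k" if "k \<in> set (y # zs)" for k
    using "3.prems" that by (auto simp: less_imp_le)
  then have "consecutive_in (\<lambda>k. k \<in> set (x # y # zs)) a b
      \<longleftrightarrow> (a = x \<and> b = y) \<or> consecutive_in (\<lambda>k. k \<in> set (y # zs)) a b" for a b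
    using "3.prems" consecutive_in_insert_min[of x y "\<lambda>k. k \<in> set (y # zs)" a b] by simp
  with "3.IH" "3.prems" show ?case by auto
qed (auto simp: consecutive_in_def)

text \<open>\<open>side_tour n I\<close> is the pyramidal tour whose increasing path visits exactly the inner
  vertices in \<open>I\<close>; the decreasing path visits the others.\<close>

definition on_side :: "nat \<Rightarrow> nat set \<Rightarrow> nat \<Rightarrow> bool" where
  "on_side n I k \<longleftrightarrow> k = 1 \<or> k = n \<or> k \<in> I"

definition side_tour :: "nat \<Rightarrow> nat set \<Rightarrow> nat set set" where
  "side_tour n I = {{i, j} | i j. 1 \<le> i \<and> j \<le> n \<and>
     (consecutive_in (on_side n I) i j \<or> consecutive_in (on_side n (- I)) i j)}"

lemma on_side_iff: "1 < k \<Longrightarrow> k < n \<Longrightarrow> on_side n I k \<longleftrightarrow> k \<in> I"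
  unfolding on_side_def by auto

lemma side_tour_Compl: "side_tour n (- I) = side_tour n I"
  unfolding side_tour_def by auto

lemma mem_side_tour:
  assumes "i < j"
  shows "{i, j} \<in> side_tour n I \<longleftrightarrow> 1 \<le> i \<and> j \<le> n \<and>
    (consecutive_in (on_side n I) i j \<or> consecutive_in (on_side n (- I)) i j)"
  using assms unfolding side_tour_def consecutive_in_def by (auto simp: doubleton_eq_iff)

lemma side_tour_edgeE:
  assumes "{i, j} \<in> side_tour n I" "i < j"
  obtains J where "J = I \<or> J = - I" "1 \<le> i" "j \<le> n" "consecutive_in (on_side n J) i j"
  using assms(1) mem_side_tour[OF assms(2), of n I] that by blast

lemma side_tour_edgeI:
  assumes "J = I \<or> J = - I" "1 \<le> i" "j \<le> n" "consecutive_in (on_side n J) i j"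
  shows "{i, j} \<in> side_tour n I"
  using assms unfolding side_tour_def by auto

lemma side_tour_subset_Kn_edges: "side_tour n I \<subseteq> Kn_edges n"
proof
  fix e assume "e \<in> side_tour n I"
  then obtain i j where e: "e = {i, j}" "1 \<le> i" "j \<le> n"
    and "consecutive_in (on_side n I) i j \<or> consecutive_in (on_side n (- I)) i j"
    unfolding side_tour_def by blast
  then have "i < j"
    unfolding consecutive_in_def by blast
  with e show "e \<in> Kn_edges n"
    unfolding Kn_edges_def by (intro CollectI exI[of _ i] exI[of _ j]) simp
qed

lemma side_tour_cong:
  assumes "\<And>k. 1 < k \<Longrightarrow> k < n \<Longrightarrow> k \<in> I \<longleftrightarrow> k \<in> J"
  shows "side_tour n I = side_tour n J"
proof -
  have "on_side n I k = on_side n J k" "on_side n (- I) k = on_side n (- J) k"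
    if "1 \<le> k" "k \<le> n" for k
    using assms[of k] that unfolding on_side_def by (cases "1 < k \<and> k < n"; force)+
  then have "consecutive_in (on_side n K) i j \<longleftrightarrow> consecutive_in (on_side n K') i j"
    if "K = I \<and> K' = J \<or> K = - I \<and> K' = - J" "1 \<le> i" "j \<le> n" for K K' i j
    by (intro consecutive_in_cong) (use that in auto)
  then show ?thesis
    unfolding side_tour_def by blast
qed

lemma consecutive_in_mem_iff:
  assumes "S \<subseteq> {1..n}" "\<And>k. 1 \<le> k \<Longrightarrow> k \<le> n \<Longrightarrow> k \<in> S \<longleftrightarrow> P k"
  shows "consecutive_in (\<lambda>k. k \<in> S) i j \<longleftrightarrow> 1 \<le> i \<and> j \<le> n \<and> consecutive_in P i j"
proof -
  have "consecutive_in (\<lambda>k. k \<in> S) i j \<longleftrightarrow> consecutive_in P i j" if "1 \<le> i" "j \<le> n"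
    by (rule consecutive_in_cong) (use assms(2) that in auto)
  moreover have "1 \<le> i \<and> j \<le> n" if "consecutive_in (\<lambda>k. k \<in> S) i j"
    using that assms(1) unfolding consecutive_in_def by auto
  ultimately show ?thesis by blast
qed

lemma cycle_edges_pyramidal:
  assumes "sorted_wrt (<) is" "sorted_wrt (>) js" "set is \<union> set js = {2..<n}"
    "set is \<inter> set js = {}" "1 < n"
  shows "cycle_edges (1 # is @ n # js) = side_tour n (set is)"
proof -
  let ?up = "1 # is @ [n]" and ?down = "1 # rev js @ [n]"
  have range: "set is \<subseteq> {2..<n}" "set js \<subseteq> {2..<n}"
    using assms(3) by auto
  then have sorted: "sorted_wrt (<) ?up" "sorted_wrt (<) ?down"
    using assms(1,2,5) by (auto simp: sorted_wrt_append sorted_wrt_rev)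
  have sub: "set ?up \<subseteq> {1..n}" "set ?down \<subseteq> {1..n}"
    using range assms(5) by auto
  have up: "k \<in> set ?up \<longleftrightarrow> on_side n (set is) k" for k
    unfolding on_side_def by auto
  have down: "k \<in> set ?down \<longleftrightarrow> on_side n (- set is) k" if "1 \<le> k" "k \<le> n" for k
    using assms(3,4) that unfolding on_side_def by auto
  have "consecutive_in (\<lambda>k. k \<in> set ?up) i j
      \<longleftrightarrow> 1 \<le> i \<and> j \<le> n \<and> consecutive_in (on_side n (set is)) i j"
    "consecutive_in (\<lambda>k. k \<in> set ?down) i j
      \<longleftrightarrow> 1 \<le> i \<and> j \<le> n \<and> consecutive_in (on_side n (- set is)) i j" for i j
    using consecutive_in_mem_iff[OF sub(1) up] consecutive_in_mem_iff[OF sub(2) down] by blast+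
  then have "path_edges ?up \<union> path_edges ?down = side_tour n (set is)"
    unfolding path_edges_sorted[OF sorted(1)] path_edges_sorted[OF sorted(2)] side_tour_def
    by (simp only: Collect_disj_eq[symmetric]) blast
  then show ?thesis
    by (simp add: cycle_edges_split)
qed

definition increasing_side :: "nat \<Rightarrow> (nat \<Rightarrow> bool) \<Rightarrow> nat set" where
  "increasing_side n c = insert 2 {k. 3 \<le> k \<and> k < n \<and> c k}"

lemma tour_of_code_eq_side_tour:
  assumes "3 \<le> n"
  shows "tour_of_code n c = side_tour n (increasing_side n c)"
proof -
  have "tour_of_code n c = side_tour n (set (2 # filter c [3..<n]))"
    unfolding tour_of_code_def
    by (rule cycle_edges_pyramidal) (use assms in \<open>auto simp: sorted_wrt_filter sorted_wrt_rev\<close>)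
  also have "set (2 # filter c [3..<n]) = increasing_side n c"
    unfolding increasing_side_def by auto
  finally show ?thesis .
qed

lemma tour_of_code_in_PT:
  assumes "3 \<le> n"
  shows "tour_of_code n c \<in> PT n"
proof -
  have "pyramidal_seq n (1 # (2 # filter c [3..<n]) @ n # rev (filter (\<lambda>i. \<not> c i) [3..<n]))"
    unfolding pyramidal_seq_def
  proof (intro conjI exI)
    show "sorted_wrt (<) (2 # filter c [3..<n])" "sorted_wrt (>) (rev (filter (\<lambda>i. \<not> c i) [3..<n]))"
      by (auto simp: sorted_wrt_filter sorted_wrt_rev)
  qed (use assms in auto)
  then show ?thesis
    unfolding PT_def tour_of_code_def by blast
qed

lemma PT_imp_side_tour:
  assumes "T \<in> PT n"
  obtains I where "2 \<in> I" "T = side_tour n I"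
proof -
  obtain "is" js where T: "T = cycle_edges (1 # is @ n # js)" and sorted: "sorted_wrt (<) is" "sorted_wrt (>) js"
    and distinct: "distinct (1 # is @ n # js)" and set: "set (1 # is @ n # js) = {1..n}"
    using assms unfolding PT_def pyramidal_seq_def by blast
  have "1 \<notin> set is \<union> set js" "n \<notin> set is \<union> set js" "n \<noteq> 1" "set is \<inter> set js = {}"
    using distinct by auto
  moreover have "insert 1 (insert n (set is \<union> set js)) = {1..n}"
    using set by auto
  ultimately have "set is \<union> set js = {1..n} - {1, n}" "1 < n" "set is \<inter> set js = {}"
    by (blast, simp add: set_eq_iff, metis atLeastAtMost_iff insertCI le_neq_implies_less, blast)
  then have "set is \<union> set js = {2..<n}" "1 < n" "set is \<inter> set js = {}"
    by auto
  then have "T = side_tour n (set is)"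
    unfolding T using cycle_edges_pyramidal sorted by blast
  then show thesis
    using that side_tour_Compl[of n "set is"] by (cases "2 \<in> set is") auto
qed

lemma PT_subset_Kn_edges:
  assumes "T \<in> PT n"
  shows "T \<subseteq> Kn_edges n"
  by (rule PT_imp_side_tour[OF assms]) (simp add: side_tour_subset_Kn_edges)

lemma finite_Kn_edges: "finite (Kn_edges n)"
  by (rule finite_subset[of _ "Pow {1..n}"]) (auto simp: Kn_edges_def)

lemma finite_PT: "finite (PT n)"
  by (rule finite_subset[of _ "Pow (Kn_edges n)"]) (use finite_Kn_edges PT_subset_Kn_edges in auto)

section \<open>Switches\<close>

definition switch :: "nat set \<Rightarrow> nat \<Rightarrow> bool" where
  "switch I k \<longleftrightarrow> (k \<in> I) \<noteq> (Suc k \<in> I)"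

lemma edge_Suc_iff:
  assumes "2 \<le> k" "k + 2 \<le> n"
  shows "{k, Suc k} \<in> side_tour n I \<longleftrightarrow> \<not> switch I k"
  using assms by (auto simp: mem_side_tour consecutive_in_Suc on_side_iff switch_def)

lemma edge_add2_iff:
  assumes "2 \<le> k" "k + 3 \<le> n"
  shows "{k, k + 2} \<in> side_tour n I \<longleftrightarrow> switch I k \<and> switch I (Suc k)"
  using assms by (auto simp: mem_side_tour consecutive_in_Suc_Suc on_side_iff switch_def)

lemma long_edge_up_iff:
  assumes "2 \<le> v" "v + 3 \<le> n"
  shows "(\<exists>j. v + 2 < j \<and> {v, j} \<in> side_tour n I) \<longleftrightarrow> switch I v \<and> \<not> switch I (Suc v)"
proof
  assume "\<exists>j. v + 2 < j \<and> {v, j} \<in> side_tour n I"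
  then obtain j where j: "v + 2 < j" "{v, j} \<in> side_tour n I"
    by blast
  then obtain J where J: "J = I \<or> J = - I" and edge: "consecutive_in (on_side n J) v j"
    by (elim side_tour_edgeE) auto
  have "on_side n J v" "\<not> on_side n J (Suc v)" "\<not> on_side n J (v + 2)"
    using edge j consecutive_in_between[OF edge] unfolding consecutive_in_def by auto
  then have "v \<in> J" "Suc v \<notin> J" "v + 2 \<notin> J"
    using assms by (simp_all add: on_side_iff)
  with J show "switch I v \<and> \<not> switch I (Suc v)"
    unfolding switch_def by auto
next
  assume switches: "switch I v \<and> \<not> switch I (Suc v)"
  define J where "J = (if v \<in> I then I else - I)"
  have J: "J = I \<or> J = - I" "v \<in> J" "Suc v \<notin> J" "v + 2 \<notin> J"
    using switches unfolding J_def switch_def by auto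
  have "\<exists>j. v + 3 \<le> j \<and> j \<le> n \<and> consecutive_in (on_side n J) v j"
  proof (rule consecutive_in_exists_above)
    show "\<not> on_side n J k" if "v < k" "k < v + 3" for k
    proof -
      have "k = Suc v \<or> k = Suc (Suc v)"
        using that by arith
      then show ?thesis
        using that J assms unfolding on_side_def by auto
    qed
  qed (use J assms in \<open>auto simp: on_side_def\<close>)
  then obtain j where j: "v + 3 \<le> j" "j \<le> n" and edge: "consecutive_in (on_side n J) v j"
    by blast
  have "{v, j} \<in> side_tour n I"
    using side_tour_edgeI[OF J(1) _ j(2) edge] assms(1) by simp
  moreover have "v + 2 < j"
    using j(1) by linarith
  ultimately show "\<exists>j. v + 2 < j \<and> {v, j} \<in> side_tour n I"
    by blast
qed

lemma long_edge_down_iff: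
  assumes "2 \<le> u" "u + 3 \<le> n"
  shows "(\<exists>j. j < u \<and> {j, u + 2} \<in> side_tour n I) \<longleftrightarrow> switch I (Suc u) \<and> \<not> switch I u"
proof
  assume "\<exists>j. j < u \<and> {j, u + 2} \<in> side_tour n I"
  then obtain j where j: "j < u" "{j, u + 2} \<in> side_tour n I"
    by blast
  then obtain J where J: "J = I \<or> J = - I" and edge: "consecutive_in (on_side n J) j (u + 2)"
    by (elim side_tour_edgeE) auto
  have "\<not> on_side n J u" "\<not> on_side n J (Suc u)" "on_side n J (u + 2)"
    using edge j consecutive_in_between[OF edge] unfolding consecutive_in_def by auto
  then have "u \<notin> J" "Suc u \<notin> J" "u + 2 \<in> J"
    using assms by (simp_all add: on_side_iff)
  with J show "switch I (Suc u) \<and> \<not> switch I u"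
    unfolding switch_def by auto
next
  assume switches: "switch I (Suc u) \<and> \<not> switch I u"
  define J where "J = (if u + 2 \<in> I then I else - I)"
  have J: "J = I \<or> J = - I" "u \<notin> J" "Suc u \<notin> J" "u + 2 \<in> J"
    using switches unfolding J_def switch_def by auto
  have "\<exists>j. 1 \<le> j \<and> j \<le> u - 1 \<and> consecutive_in (on_side n J) j (u + 2)"
  proof (rule consecutive_in_exists_below)
    show "\<not> on_side n J k" if "u - 1 < k" "k < u + 2" for k
    proof -
      have "k = u \<or> k = Suc u"
        using that by arith
      then show ?thesis
        using that J assms unfolding on_side_def by auto
    qed
  qed (use J assms in \<open>auto simp: on_side_def\<close>)
  then obtain j where j: "1 \<le> j" "j < u" and edge: "consecutive_in (on_side n J) j (u + 2)"
    using assms(1) by auto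
  have "{j, u + 2} \<in> side_tour n I"
    using side_tour_edgeI[OF J(1) j(1) _ edge] assms(2) by simp
  with j(2) show "\<exists>j. j < u \<and> {j, u + 2} \<in> side_tour n I"
    by blast
qed

lemma long_edge_from_1_iff:
  assumes "2 \<in> I" "5 \<le> n"
  shows "(\<exists>j. 5 \<le> j \<and> {1, j} \<in> side_tour n I) \<longleftrightarrow> 3 \<in> I \<and> 4 \<in> I"
proof
  assume "\<exists>j. 5 \<le> j \<and> {1, j} \<in> side_tour n I"
  then obtain j where j: "5 \<le> j" "{1, j} \<in> side_tour n I"
    by blast
  then obtain J where J: "J = I \<or> J = - I" and edge: "consecutive_in (on_side n J) 1 j"
    by (elim side_tour_edgeE) auto
  have "\<not> on_side n J 2" "\<not> on_side n J 3" "\<not> on_side n J 4"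
    using j consecutive_in_between[OF edge] by auto
  with J assms show "3 \<in> I \<and> 4 \<in> I"
    unfolding on_side_def by auto
next
  assume "3 \<in> I \<and> 4 \<in> I"
  then have "\<exists>j. 5 \<le> j \<and> j \<le> n \<and> consecutive_in (on_side n (- I)) 1 j"
    by (intro consecutive_in_exists_above)
      (use assms in \<open>auto simp: on_side_def less_Suc_eq numeral_eq_Suc\<close>)
  then obtain j where j: "5 \<le> j" "j \<le> n" and edge: "consecutive_in (on_side n (- I)) 1 j"
    by blast
  have "{1, j} \<in> side_tour n I"
    using side_tour_edgeI[of "- I" I 1 j n] edge j(2) by simp
  with j(1) show "\<exists>j. 5 \<le> j \<and> {1, j} \<in> side_tour n I"
    by blast
qed

lemma edge_to_n_exists:
  assumes "2 \<le> L" "L < n" "\<And>k. L \<le> k \<Longrightarrow> k < n \<Longrightarrow> k \<in> I \<longleftrightarrow> L \<in> I"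
  shows "\<exists>j. j < L \<and> {j, n} \<in> side_tour n I"
proof -
  define J where "J = (if L \<in> I then - I else I)"
  have J: "J = I \<or> J = - I"
    unfolding J_def by simp
  have J_out: "k \<notin> J" if "L \<le> k" "k < n" for k
    using assms(3)[OF that] unfolding J_def by auto
  have "\<exists>j. 1 \<le> j \<and> j \<le> L - 1 \<and> consecutive_in (on_side n J) j n"
    by (rule consecutive_in_exists_below) (use J_out assms(1,2) in \<open>auto simp: on_side_def\<close>)
  then obtain j where j: "1 \<le> j" "j < L" and edge: "consecutive_in (on_side n J) j n"
    using assms(1) by auto
  have "{j, n} \<in> side_tour n I"
    using side_tour_edgeI[OF J(1) j(1) _ edge] by simp
  with j(2) show ?thesis
    by blast
qed

lemma mem_eq_if_switch_eq:
  assumes "2 \<in> I" "2 \<in> J" "\<And>k. 2 \<le> k \<Longrightarrow> k + 2 \<le> n \<Longrightarrow> switch I k = switch J k"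
  shows "2 \<le> k \<Longrightarrow> k < n \<Longrightarrow> k \<in> I \<longleftrightarrow> k \<in> J"
proof (induction k rule: nat_induct_at_least)
  case (Suc k)
  then show ?case
    using assms(3)[of k] unfolding switch_def by auto
qed (use assms in simp)

lemma side_tour_eq_if_switch_eq:
  assumes "2 \<in> I" "2 \<in> J" "\<And>k. 2 \<le> k \<Longrightarrow> k + 2 \<le> n \<Longrightarrow> switch I k = switch J k"
  shows "side_tour n I = side_tour n J"
  by (rule side_tour_cong) (use mem_eq_if_switch_eq[OF assms] in auto)

lemma edge_not_over_same_side:
  assumes "i < w" "w < j" "1 < i \<and> (w \<in> I \<longleftrightarrow> i \<in> I) \<or> j < n \<and> (w \<in> I \<longleftrightarrow> j \<in> I)"
  shows "{i, j} \<notin> side_tour n I"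
proof
  assume "{i, j} \<in> side_tour n I"
  then obtain J where J: "J = I \<or> J = - I" and "1 \<le> i" "j \<le> n"
    and edge: "consecutive_in (on_side n J) i j"
    using assms(1,2) by (elim side_tour_edgeE) auto
  then have "w \<notin> J"
    using assms(1,2) consecutive_in_between[OF edge] by (auto simp: on_side_iff)
  moreover have "1 < i \<Longrightarrow> i \<in> J" "j < n \<Longrightarrow> j \<in> J"
    using edge assms(1,2) \<open>j \<le> n\<close> unfolding consecutive_in_def by (auto simp: on_side_iff)
  moreover have "1 < i \<and> (w \<in> J \<longleftrightarrow> i \<in> J) \<or> j < n \<and> (w \<in> J \<longleftrightarrow> j \<in> J)"
    using assms(3) J by auto
  ultimately show False
    by blast
qed

lemma edge_not_over_both_sides:
  assumes "i < w" "w < j" "i < w'" "w' < j" "w \<in> I" "w' \<notin> I" "j \<le> n"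
  shows "{i, j} \<notin> side_tour n I"
proof
  assume "{i, j} \<in> side_tour n I"
  then obtain J where J: "J = I \<or> J = - I" and edge: "consecutive_in (on_side n J) i j"
    using assms by (elim side_tour_edgeE) auto
  have "\<not> on_side n J w" "\<not> on_side n J w'"
    using assms consecutive_in_between[OF edge] by auto
  then show False
    using J assms(5,6) unfolding on_side_def by auto
qed

section \<open>The tours \<open>x\<^sub>q\<^sub>,\<^sub>s\<close>\<close>

text \<open>The switches of \<open>x\<^sub>q\<^sub>,\<^sub>s\<close> form the run \<open>{3..2q+1}\<close> (just \<open>{2}\<close> if \<open>q = 0\<close>) in the
  left half and the run \<open>{4m+3-2s..4m+1}\<close> (just \<open>{4m+2}\<close> if \<open>s = 0\<close>) in the right half. Its
  increasing path jumps from \<open>left_end q\<close> to \<open>right_start m s\<close>.\<close>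

definition left_switch :: "nat \<Rightarrow> nat \<Rightarrow> bool" where
  "left_switch q k \<longleftrightarrow> k = 2 \<and> q = 0 \<or> 3 \<le> k \<and> k \<le> 2 * q + 1"

definition right_switch :: "nat \<Rightarrow> nat \<Rightarrow> nat \<Rightarrow> bool" where
  "right_switch m s k \<longleftrightarrow> 4 * m + 3 - 2 * s \<le> k \<and> k \<le> 4 * m + 1 \<or> k = 4 * m + 2 \<and> s = 0"

definition left_end :: "nat \<Rightarrow> nat" where
  "left_end q = (if q = 0 then 2 else 2 * q + 1)"

definition right_start :: "nat \<Rightarrow> nat \<Rightarrow> nat" where
  "right_start m s = (if s = 0 then 4 * m + 3 else 4 * m + 4 - 2 * s)"

definition qs_side :: "nat \<Rightarrow> nat \<Rightarrow> nat \<Rightarrow> nat \<Rightarrow> nat set" where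
  "qs_side n m q s = increasing_side n (code_qs m q s)"

lemma code_qs_iff:
  assumes "3 \<le> k" "s \<le> m"
  shows "code_qs m q s k \<longleftrightarrow>
    odd k \<and> k \<le> 2 * q + 1 \<or> even k \<and> 4 * m + 4 - 2 * s \<le> k \<and> k \<le> 4 * m + 2 \<or> 4 * m + 3 \<le> k"
proof -
  have "(\<exists>i\<in>{1..q}. k = 2 * i + 1) \<longleftrightarrow> odd k \<and> k \<le> 2 * q + 1"
    using assms(1) by (auto elim!: oddE intro!: bexI)
  moreover have "(\<exists>j\<in>{1..s}. k = 4 * m + 4 - 2 * j) \<longleftrightarrow> even k \<and> 4 * m + 4 - 2 * s \<le> k \<and> k \<le> 4 * m + 2"
  proof
    assume "even k \<and> 4 * m + 4 - 2 * s \<le> k \<and> k \<le> 4 * m + 2"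
    then show "\<exists>j\<in>{1..s}. k = 4 * m + 4 - 2 * j"
      using assms by (intro bexI[of _ "(4 * m + 4 - k) div 2"]) (auto elim!: evenE)
  qed (use assms in auto)
  ultimately show ?thesis
    unfolding code_qs_def by blast
qed

locale qs_tours =
  fixes n m :: nat
  assumes m_pos: "1 \<le> m" and n_large: "4 * m + 3 \<le> n"
begin

lemma mem_qs_side_left:
  assumes "s \<le> m" "k \<le> 2 * m + 2"
  shows "k \<in> qs_side n m q s \<longleftrightarrow> k = 2 \<or> odd k \<and> 3 \<le> k \<and> k \<le> 2 * q + 1"
  using assms n_large code_qs_iff[OF _ assms(1)]
  unfolding qs_side_def increasing_side_def by auto

lemma mem_qs_side_right:
  assumes "q \<le> m" "s \<le> m" "2 * m + 2 \<le> k" "k < n"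
  shows "k \<in> qs_side n m q s \<longleftrightarrow> even k \<and> 4 * m + 4 - 2 * s \<le> k \<and> k \<le> 4 * m + 2 \<or> 4 * m + 3 \<le> k"
  using assms m_pos code_qs_iff[OF _ assms(2)]
  unfolding qs_side_def increasing_side_def by auto

lemma two_mem_qs_side: "2 \<in> qs_side n m q s"
  unfolding qs_side_def increasing_side_def by simp

lemma four_not_mem_qs_side: "s \<le> m \<Longrightarrow> 4 \<notin> qs_side n m q s"
  using mem_qs_side_left[of s 4 q] m_pos by simp

lemma switch_qs_side_left:
  assumes "s \<le> m" "2 \<le> k" "k \<le> 2 * m + 1"
  shows "switch (qs_side n m q s) k \<longleftrightarrow> left_switch q k"
proof -
  have "switch (qs_side n m q s) k \<longleftrightarrow>
      (k = 2 \<or> odd k \<and> 3 \<le> k \<and> k \<le> 2 * q + 1) \<noteq> (odd (Suc k) \<and> 3 \<le> Suc k \<and> Suc k \<le> 2 * q + 1)"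
    using mem_qs_side_left[OF assms(1), of k q] mem_qs_side_left[OF assms(1), of "Suc k" q] assms
    unfolding switch_def by simp
  also have "\<dots> \<longleftrightarrow> left_switch q k"
    unfolding left_switch_def using assms(2) by (cases "even k") (auto elim!: evenE oddE)
  finally show ?thesis .
qed

lemma switch_qs_side_right:
  assumes "q \<le> m" "s \<le> m" "2 * m + 2 \<le> k" "k + 2 \<le> n"
  shows "switch (qs_side n m q s) k \<longleftrightarrow> right_switch m s k"
proof -
  have "switch (qs_side n m q s) k \<longleftrightarrow>
      (even k \<and> 4 * m + 4 - 2 * s \<le> k \<and> k \<le> 4 * m + 2 \<or> 4 * m + 3 \<le> k)
      \<noteq> (even (Suc k) \<and> 4 * m + 4 - 2 * s \<le> Suc k \<and> Suc k \<le> 4 * m + 2 \<or> 4 * m + 3 \<le> Suc k)"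
    using mem_qs_side_right[OF assms(1,2), of k] mem_qs_side_right[OF assms(1,2), of "Suc k"] assms
    unfolding switch_def by simp
  also have "\<dots> \<longleftrightarrow> right_switch m s k"
  proof -
    have "4 * m + 4 - 2 * s \<le> 2 * i" if "4 * m + 3 - 2 * s \<le> 2 * i" for i
    proof -
      have "2 * (2 * m + 1 - s) < 2 * i"
        using that assms(2) by linarith
      then have "2 * m + 1 - s < i"
        by simp
      then show ?thesis
        using assms(2) by linarith
    qed
    then show ?thesis
      unfolding right_switch_def using assms(3) by (cases "even k") (auto elim!: evenE oddE)
  qed
  finally show ?thesis .
qed

lemma left_end_mem:
  assumes "q \<le> q'" "q' \<le> m" "s \<le> m"
  shows "left_end q \<in> qs_side n m q' s"
  using assms mem_qs_side_left[OF assms(3), of "left_end q" q'] unfolding left_end_def by auto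

lemma jump_edge_mem:
  assumes "q \<le> m" "s \<le> m"
  shows "{left_end q, right_start m s} \<in> side_tour n (qs_side n m q s)"
proof (rule side_tour_edgeI)
  let ?X = "qs_side n m q s"
  have bounds: "2 \<le> left_end q" "left_end q \<le> 2 * m + 1" "2 * m + 4 \<le> right_start m s"
    "right_start m s \<le> 4 * m + 3"
    using assms m_pos unfolding left_end_def right_start_def by auto
  have "k \<notin> ?X" if "left_end q < k" "k < right_start m s" for k
  proof (cases "k \<le> 2 * m + 2")
    case True
    then show ?thesis
      using that mem_qs_side_left[OF assms(2) True] unfolding left_end_def by (auto split: if_splits)
  next
    case False
    then show ?thesis
      using that bounds n_large mem_qs_side_right[OF assms, of k] unfolding right_start_def
      by (auto split: if_splits)
  qed
  moreover have "right_start m s = n \<or> right_start m s \<in> ?X"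
    using bounds n_large mem_qs_side_right[OF assms, of "right_start m s"] unfolding right_start_def
    by (cases "4 * m + 3 < n") (auto split: if_splits)
  ultimately show "consecutive_in (on_side n ?X) (left_end q) (right_start m s)"
    using bounds n_large left_end_mem[OF order_refl assms]
    unfolding consecutive_in_def on_side_def by auto
qed (use n_large m_pos in \<open>auto simp: left_end_def right_start_def\<close>)

lemma jump_edge_left:
  assumes "q \<le> m" "s \<le> m" "q' \<le> m" "s' \<le> m"
    and edge: "{left_end q, right_start m s} \<in> side_tour n (qs_side n m q' s')"
  shows "q' = q"
proof (rule ccontr)
  let ?X = "qs_side n m q' s'" and ?i = "left_end q" and ?j = "right_start m s"
  have j: "2 * m + 4 \<le> ?j"
    using assms(2) m_pos unfolding right_start_def by auto
  assume "q' \<noteq> q"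
  then consider "q < q'" | "q' < q"
    by linarith
  then show False
  proof cases
    case 1
    then have "?i < 2 * q' + 1" "1 < ?i" "2 * q' + 1 \<in> ?X" "?i \<in> ?X"
      using assms(3,4) mem_qs_side_left[of s' "2 * q' + 1" q'] left_end_mem[of q q' s']
      unfolding left_end_def by auto
    then show False
      using edge_not_over_same_side[of ?i "2 * q' + 1" ?j ?X n] edge j assms(3) by auto
  next
    case 2
    then have "?i = 2 * q + 1" "2 * q + 1 \<notin> ?X" "2 * q + 2 \<notin> ?X"
      using assms(1,4) mem_qs_side_left[of s' "2 * q + 1" q'] mem_qs_side_left[of s' "2 * q + 2" q']
      unfolding left_end_def by auto
    then show False
      using edge_not_over_same_side[of ?i "2 * q + 2" ?j ?X n] edge j assms(1) 2 by auto
  qed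
qed

lemma jump_edge_right:
  assumes "q \<le> m" "s \<le> m" "s' \<le> m"
    and edge: "{left_end q, right_start m s} \<in> side_tour n (qs_side n m q s')"
  shows "s' = s"
proof (rule ccontr)
  let ?X = "qs_side n m q s'" and ?i = "left_end q" and ?j = "right_start m s"
  have i: "2 \<le> ?i" "?i \<le> 2 * m + 1"
    using assms(1) m_pos unfolding left_end_def by auto
  assume "s' \<noteq> s"
  then consider "s < s'" | "s' < s"
    by linarith
  then show False
  proof cases
    case 1
    have "even (4 * m + 4 - 2 * s')"
      by (auto intro!: dvd_diff_nat)
    with 1 have "right_start m s' < ?j" "?i < right_start m s'" "right_start m s' \<in> ?X" "?i \<in> ?X"
      using assms(3) i n_large mem_qs_side_right[OF assms(1,3), of "right_start m s'"] left_end_mem[OF _ assms(1,3)]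
      unfolding right_start_def by auto
    then show False
      using edge_not_over_same_side[of ?i "right_start m s'" ?j ?X n] edge i by auto
  next
    case 2
    then have j: "?j = 4 * m + 4 - 2 * s" "2 * m + 2 < ?j" "?j < n"
      using assms(2) n_large unfolding right_start_def by auto
    then have "?j \<notin> ?X" "2 * m + 2 \<notin> ?X"
      using 2 mem_qs_side_right[OF assms(1,3), of ?j] mem_qs_side_left[OF assms(3), of "2 * m + 2" q] m_pos
      by auto
    then show False
      using edge_not_over_same_side[of ?i "2 * m + 2" ?j ?X n] edge i j by auto
  qed
qed

lemma jump_edge_iff:
  assumes "q \<le> m" "s \<le> m" "q' \<le> m" "s' \<le> m"
  shows "{left_end q, right_start m s} \<in> side_tour n (qs_side n m q' s') \<longleftrightarrow> q' = q \<and> s' = s"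
  using jump_edge_left[OF assms] jump_edge_right[OF assms(1,2,4)] jump_edge_mem[OF assms(1,2)] by blast

lemma no_edge_to_n:
  assumes "q \<le> m" "s \<le> m" "4 * m + 4 \<le> n" "j < 4 * m + 1"
  shows "{j, n} \<notin> side_tour n (qs_side n m q s)"
  by (rule edge_not_over_both_sides[of _ "n - 1" _ "4 * m + 1"])
    (use assms m_pos mem_qs_side_right[OF assms(1,2), of "n - 1"] mem_qs_side_right[OF assms(1,2), of "4 * m + 1"]
      in auto)

end

section \<open>Tours between two tours\<close>

lemma steady_imp_const:
  assumes "\<And>v. a \<le> v \<Longrightarrow> v < b \<Longrightarrow> t v = t (Suc v)" "a \<le> k" "k \<le> b"
  shows "t k = t a"
  using assms(2,3)
proof (induction k rule: nat_induct_at_least)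
  case (Suc k)
  then show ?case
    using assms(1)[of k] by simp
qed simp

lemma agree_with_one_of_two:
  fixes t tx ty :: "nat \<Rightarrow> bool"
  assumes agree: "\<And>k. k \<in> K \<Longrightarrow> tx k = ty k \<Longrightarrow> t k = tx k"
    and gap: "\<And>k. k \<in> K \<Longrightarrow> tx k \<noteq> ty k \<Longrightarrow> a \<le> k \<and> k \<le> b"
    and on_gap: "\<And>k. a \<le> k \<Longrightarrow> k \<le> b \<Longrightarrow> \<not> tx k \<and> ty k"
    and steady: "\<And>v. a \<le> v \<Longrightarrow> v < b \<Longrightarrow> t v = t (Suc v)"
  shows "(\<forall>k\<in>K. t k = tx k) \<or> (\<forall>k\<in>K. t k = ty k)"
proof -
  have const: "t k = t a" if "a \<le> k" "k \<le> b" for k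
    using steady_imp_const[of a b t k] steady that by blast
  have "t k = (if t a then ty k else tx k)" if "k \<in> K" for k
  proof (cases "tx k = ty k")
    case True
    then show ?thesis
      using agree that by simp
  next
    case False
    then have "a \<le> k" "k \<le> b"
      using gap that by auto
    then show ?thesis
      using const[of k] on_gap[of k] by simp
  qed
  then show ?thesis
    by (cases "t a") auto
qed

locale tour_between =
  fixes n :: nat and I X Y :: "nat set"
  assumes common_edges: "side_tour n X \<inter> side_tour n Y \<subseteq> side_tour n I"
    and edges_from_either: "side_tour n I \<subseteq> side_tour n X \<union> side_tour n Y"
begin

lemma switch_eq_if_agree:
  assumes "2 \<le> k" "k + 2 \<le> n" "switch X k = switch Y k"
  shows "switch I k = switch X k"
proof (cases "switch X k")
  case True
  then have "{k, Suc k} \<notin> side_tour n X \<union> side_tour n Y"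
    using assms(3) edge_Suc_iff[OF assms(1,2)] by simp
  then have "{k, Suc k} \<notin> side_tour n I"
    using edges_from_either by blast
  then show ?thesis
    using True edge_Suc_iff[OF assms(1,2), of I] by simp
next
  case False
  then have "{k, Suc k} \<in> side_tour n X \<inter> side_tour n Y"
    using assms(3) edge_Suc_iff[OF assms(1,2)] by simp
  then have "{k, Suc k} \<in> side_tour n I"
    using common_edges by blast
  then show ?thesis
    using False edge_Suc_iff[OF assms(1,2), of I] by simp
qed

lemma switch_steady:
  assumes "2 \<le> v" "v + 3 \<le> n" "switch X v = switch X (Suc v)" "switch Y v = switch Y (Suc v)"
  shows "switch I v = switch I (Suc v)"
proof (rule ccontr)
  note up = long_edge_up_iff[OF assms(1,2)] and down = long_edge_down_iff[OF assms(1,2)]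
  assume "switch I v \<noteq> switch I (Suc v)"
  then consider "switch I v \<and> \<not> switch I (Suc v)" | "switch I (Suc v) \<and> \<not> switch I v"
    by blast
  then show False
  proof cases
    case 1
    then obtain j where "v + 2 < j" "{v, j} \<in> side_tour n I"
      using up[of I] by blast
    then have "(\<exists>j. v + 2 < j \<and> {v, j} \<in> side_tour n X) \<or> (\<exists>j. v + 2 < j \<and> {v, j} \<in> side_tour n Y)"
      using edges_from_either by blast
    then show False
      using assms(3,4) unfolding up[of X] up[of Y] by auto
  next
    case 2
    then obtain j where "j < v" "{j, v + 2} \<in> side_tour n I"
      using down[of I] by blast
    then have "(\<exists>j. j < v \<and> {j, v + 2} \<in> side_tour n X) \<or> (\<exists>j. j < v \<and> {j, v + 2} \<in> side_tour n Y)"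
      using edges_from_either by blast
    then show False
      using assms(3,4) unfolding down[of X] down[of Y] by auto
  qed
qed

lemma no_double_switch:
  assumes "2 \<le> k" "k + 3 \<le> n"
    "\<not> (switch X k \<and> switch X (Suc k))" "\<not> (switch Y k \<and> switch Y (Suc k))"
  shows "\<not> (switch I k \<and> switch I (Suc k))"
proof
  assume "switch I k \<and> switch I (Suc k)"
  then have "{k, k + 2} \<in> side_tour n I"
    using edge_add2_iff[OF assms(1,2), of I] by simp
  then have "{k, k + 2} \<in> side_tour n X \<union> side_tour n Y"
    using edges_from_either by blast
  then show False
    using assms(3,4) edge_add2_iff[OF assms(1,2), of X] edge_add2_iff[OF assms(1,2), of Y] by auto
qed

lemma switch_at_2_or_3:
  assumes "2 \<in> I" "2 \<in> X" "2 \<in> Y" "4 \<notin> X" "4 \<notin> Y" "5 \<le> n"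
  shows "switch I 2 \<or> switch I 3"
proof (rule ccontr)
  assume "\<not> (switch I 2 \<or> switch I 3)"
  then have "3 \<in> I \<and> 4 \<in> I"
    using assms(1) unfolding switch_def by simp
  then obtain j where "5 \<le> j" "{1, j} \<in> side_tour n I"
    using long_edge_from_1_iff[OF assms(1,6)] by blast
  then have "3 \<in> X \<and> 4 \<in> X \<or> 3 \<in> Y \<and> 4 \<in> Y"
    using edges_from_either long_edge_from_1_iff[OF assms(2,6)] long_edge_from_1_iff[OF assms(3,6)] by blast
  with assms(4,5) show False
    by blast
qed

lemma switch_in_final_block:
  assumes "2 \<le> L" "L < n"
    "\<And>j. j < L \<Longrightarrow> {j, n} \<notin> side_tour n X" "\<And>j. j < L \<Longrightarrow> {j, n} \<notin> side_tour n Y"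
  shows "\<exists>k. L \<le> k \<and> k + 2 \<le> n \<and> switch I k"
proof (rule ccontr)
  assume no_switch: "\<not> ?thesis"
  have "(v \<in> I) = (Suc v \<in> I)" if "L \<le> v" "v < n - 1" for v
    using no_switch that unfolding switch_def by auto
  then have "(k \<in> I) = (L \<in> I)" if "L \<le> k" "k < n" for k
    using steady_imp_const[of L "n - 1" "\<lambda>k. k \<in> I" k] that by simp
  then obtain j where "j < L" "{j, n} \<in> side_tour n I"
    using edge_to_n_exists[OF assms(1,2), of I] by blast
  then show False
    using edges_from_either assms(3,4) by blast
qed

end

locale qs_between = qs_tours n m + tour_between n I "qs_side n m q s" "qs_side n m q' s'"
  for n m :: nat and I :: "nat set" and q s q' s' :: nat +
  assumes q_le: "q \<le> m" and s_le: "s \<le> m" and q'_le: "q' \<le> m" and s'_le: "s' \<le> m"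
    and two_mem: "2 \<in> I"
begin

lemma swap_qs: "qs_between n m I q' s' q s"
  using m_pos n_large q_le s_le q'_le s'_le two_mem common_edges edges_from_either
  by unfold_locales blast+

lemma switch_eq_left_if_agree:
  assumes "2 \<le> k" "k \<le> 2 * m + 1" "left_switch q k = left_switch q' k"
  shows "switch I k = left_switch q k"
  using assms switch_eq_if_agree[of k] switch_qs_side_left[OF s_le assms(1,2)]
    switch_qs_side_left[OF s'_le assms(1,2)] n_large by simp

lemma switch_eq_right_if_agree:
  assumes "2 * m + 2 \<le> k" "k + 2 \<le> n" "right_switch m s k = right_switch m s' k"
  shows "switch I k = right_switch m s k"
  using assms switch_eq_if_agree[of k] switch_qs_side_right[OF q_le s_le assms(1,2)]
    switch_qs_side_right[OF q'_le s'_le assms(1,2)] m_pos by simp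

lemma switch_at_2:
  assumes "q < q'"
  shows "switch I 3 = left_switch q 3 \<Longrightarrow> switch I 2 = left_switch q 2"
    and "switch I 3 = left_switch q' 3 \<Longrightarrow> switch I 2 = left_switch q' 2"
proof -
  have agree: "q \<noteq> 0 \<Longrightarrow> switch I 2 = left_switch q 2"
    using switch_eq_left_if_agree[of 2] assms m_pos by (simp add: left_switch_def)
  show "switch I 2 = left_switch q 2" if "switch I 3 = left_switch q 3"
  proof (cases "q = 0")
    case True
    have "switch I 2 \<or> switch I 3"
      by (rule switch_at_2_or_3) (use two_mem two_mem_qs_side four_not_mem_qs_side s_le s'_le m_pos n_large in auto)
    with True that show ?thesis
      unfolding left_switch_def by auto
  qed (use agree in simp)
  show "switch I 2 = left_switch q' 2" if "switch I 3 = left_switch q' 3"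
  proof (cases "q = 0")
    case True
    have "\<not> (switch I 2 \<and> switch I (Suc 2))"
      by (rule no_double_switch)
        (use True assms m_pos n_large s_le s'_le switch_qs_side_left in \<open>auto simp: left_switch_def\<close>)
    with that assms show ?thesis
      unfolding left_switch_def by auto
  qed (use agree assms in \<open>simp add: left_switch_def\<close>)
qed

lemma left_block:
  assumes "q < q'"
  shows "(\<forall>k\<in>{2..2 * m + 1}. switch I k = left_switch q k) \<or> (\<forall>k\<in>{2..2 * m + 1}. switch I k = left_switch q' k)"
proof -
  have X: "switch (qs_side n m q s) k = left_switch q k" and Y: "switch (qs_side n m q' s') k = left_switch q' k"
    if "2 \<le> k" "k \<le> 2 * m + 1" for k
    using switch_qs_side_left[OF s_le that] switch_qs_side_left[OF s'_le that] by blast+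
  have "(\<forall>k\<in>{3..2 * m + 1}. switch I k = left_switch q k) \<or> (\<forall>k\<in>{3..2 * m + 1}. switch I k = left_switch q' k)"
  proof (rule agree_with_one_of_two[where a = "max 3 (2 * q + 2)" and b = "2 * q' + 1"])
    show "switch I v = switch I (Suc v)" if "max 3 (2 * q + 2) \<le> v" "v < 2 * q' + 1" for v
      by (rule switch_steady) (use that assms q'_le n_large X Y in \<open>auto simp: left_switch_def\<close>)
  qed (use switch_eq_left_if_agree assms in \<open>auto simp: left_switch_def\<close>)
  moreover have "{2..2 * m + 1} = insert 2 {3..2 * m + 1}" "3 \<in> {3..2 * m + 1}"
    using m_pos by auto
  ultimately show ?thesis
    using switch_at_2[OF assms] by (metis insert_iff)
qed

lemma switch_at_4m2:
  assumes "s < s'" "4 * m + 4 \<le> n"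
  shows "(s = 0 \<Longrightarrow> \<forall>k\<in>{2 * m + 2..n - 2} - {4 * m + 2}. \<not> switch I k)
      \<Longrightarrow> switch I (4 * m + 2) = right_switch m s (4 * m + 2)"
    and "switch I (4 * m + 1) \<Longrightarrow> switch I (4 * m + 2) = right_switch m s' (4 * m + 2)"
proof -
  have agree: "s \<noteq> 0 \<Longrightarrow> switch I (4 * m + 2) = right_switch m s (4 * m + 2)"
    using switch_eq_right_if_agree[of "4 * m + 2"] assms by (simp add: right_switch_def)
  show "switch I (4 * m + 2) = right_switch m s (4 * m + 2)"
    if "s = 0 \<Longrightarrow> \<forall>k\<in>{2 * m + 2..n - 2} - {4 * m + 2}. \<not> switch I k"
  proof (cases "s = 0")
    case True
    have "\<exists>k. 2 * m + 2 \<le> k \<and> k + 2 \<le> n \<and> switch I k"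
      by (rule switch_in_final_block) (use no_edge_to_n q_le s_le q'_le s'_le assms(2) m_pos in auto)
    with True that[OF True] show ?thesis
      unfolding right_switch_def by fastforce
  qed (use agree in simp)
  show "switch I (4 * m + 2) = right_switch m s' (4 * m + 2)" if "switch I (4 * m + 1)"
  proof (cases "s = 0")
    case True
    have "\<not> (switch I (4 * m + 1) \<and> switch I (Suc (4 * m + 1)))"
      by (rule no_double_switch)
        (use True assms m_pos q_le s_le q'_le s'_le switch_qs_side_right in \<open>auto simp: right_switch_def\<close>)
    with that assms show ?thesis
      unfolding right_switch_def by auto
  qed (use agree assms in \<open>simp add: right_switch_def\<close>)
qed

lemma right_block:
  assumes "s < s'"
  shows "(\<forall>k\<in>{2 * m + 2..n - 2}. switch I k = right_switch m s k)
    \<or> (\<forall>k\<in>{2 * m + 2..n - 2}. switch I k = right_switch m s' k)"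
proof -
  let ?K = "{2 * m + 2..n - 2} - {4 * m + 2}"
  have X: "switch (qs_side n m q s) k = right_switch m s k" and Y: "switch (qs_side n m q' s') k = right_switch m s' k"
    if "2 * m + 2 \<le> k" "k + 2 \<le> n" for k
    using switch_qs_side_right[OF q_le s_le that] switch_qs_side_right[OF q'_le s'_le that] by blast+
  have blocks: "(\<forall>k\<in>?K. switch I k = right_switch m s k) \<or> (\<forall>k\<in>?K. switch I k = right_switch m s' k)"
  proof (rule agree_with_one_of_two[where a = "4 * m + 3 - 2 * s'" and b = "min (4 * m + 1) (4 * m + 2 - 2 * s)"])
    show "switch I v = switch I (Suc v)" if "4 * m + 3 - 2 * s' \<le> v" "v < min (4 * m + 1) (4 * m + 2 - 2 * s)" for v
      by (rule switch_steady) (use that assms s'_le n_large X Y in \<open>auto simp: right_switch_def\<close>)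
  qed (use switch_eq_right_if_agree assms s'_le in \<open>auto simp: right_switch_def\<close>)
  have K: "{2 * m + 2..n - 2} = ?K \<or> 4 * m + 4 \<le> n \<and> {2 * m + 2..n - 2} = insert (4 * m + 2) ?K"
    "4 * m + 1 \<in> ?K" "right_switch m s' (4 * m + 1)"
    using m_pos n_large assms s'_le unfolding right_switch_def by auto
  from blocks show ?thesis
  proof
    assume on_K: "\<forall>k\<in>?K. switch I k = right_switch m s k"
    then have "s = 0 \<Longrightarrow> \<forall>k\<in>?K. \<not> switch I k"
      unfolding right_switch_def by auto
    with on_K K(1) switch_at_4m2(1)[OF assms] show ?thesis
      by auto
  next
    assume on_K: "\<forall>k\<in>?K. switch I k = right_switch m s' k"
    with K(2,3) have "switch I (4 * m + 1)"
      by blast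
    with on_K K(1) switch_at_4m2(2)[OF assms] show ?thesis
      by auto
  qed
qed

lemma left_choice: "\<exists>ql\<in>{q, q'}. \<forall>k\<in>{2..2 * m + 1}. switch I k = left_switch ql k"
proof -
  consider "q = q'" | "q < q'" | "q' < q"
    by linarith
  then show ?thesis
  proof cases
    case 1
    then show ?thesis
      using switch_eq_left_if_agree by auto
  qed (use left_block qs_between.left_block[OF swap_qs] in blast)+
qed

lemma right_choice: "\<exists>sr\<in>{s, s'}. \<forall>k\<in>{2 * m + 2..n - 2}. switch I k = right_switch m sr k"
proof -
  consider "s = s'" | "s < s'" | "s' < s"
    by linarith
  then show ?thesis
  proof cases
    case 1
    have "switch I k = right_switch m s k" if "k \<in> {2 * m + 2..n - 2}" for k
    proof -
      have "2 * m + 2 \<le> k" "k + 2 \<le> n"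
        using that n_large by auto
      then show ?thesis
        using 1 switch_eq_right_if_agree by simp
    qed
    then show ?thesis
      by blast
  qed (use right_block qs_between.right_block[OF swap_qs] in blast)+
qed

lemma side_tour_eq_qs_side:
  assumes "ql \<le> m" "sr \<le> m"
    "\<forall>k\<in>{2..2 * m + 1}. switch I k = left_switch ql k"
    "\<forall>k\<in>{2 * m + 2..n - 2}. switch I k = right_switch m sr k"
  shows "side_tour n I = side_tour n (qs_side n m ql sr)"
proof (rule side_tour_eq_if_switch_eq[OF two_mem two_mem_qs_side])
  fix k assume "2 \<le> k" "k + 2 \<le> n"
  then show "switch I k = switch (qs_side n m ql sr) k"
    using assms switch_qs_side_left[OF assms(2), of k ql] switch_qs_side_right[OF assms(1,2), of k]
    by (cases "k \<le> 2 * m + 1") auto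
qed

text \<open>The jump edge of the mixed tour \<open>x\<^sub>q\<^sub>,\<^sub>s\<^sub>'\<close> lies in neither of the two given tours.\<close>

lemma mixed_side_tour:
  assumes "side_tour n I = side_tour n (qs_side n m q s')"
  shows "q = q' \<or> s = s'"
proof -
  have "{left_end q, right_start m s'} \<in> side_tour n I"
    using assms jump_edge_mem[OF q_le s'_le] by simp
  then have "{left_end q, right_start m s'} \<in> side_tour n (qs_side n m q s) \<union> side_tour n (qs_side n m q' s')"
    using edges_from_either by blast
  then show ?thesis
    using jump_edge_iff[OF q_le s'_le q_le s_le] jump_edge_iff[OF q_le s'_le q'_le s'_le] by auto
qed

theorem side_tour_cases:
  "side_tour n I = side_tour n (qs_side n m q s) \<or> side_tour n I = side_tour n (qs_side n m q' s')"
proof -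
  obtain ql sr where lr: "ql \<in> {q, q'}" "sr \<in> {s, s'}"
    and "\<forall>k\<in>{2..2 * m + 1}. switch I k = left_switch ql k"
    "\<forall>k\<in>{2 * m + 2..n - 2}. switch I k = right_switch m sr k"
    using left_choice right_choice by blast
  then have I: "side_tour n I = side_tour n (qs_side n m ql sr)"
    using side_tour_eq_qs_side q_le s_le q'_le s'_le by blast
  show ?thesis
    using lr I mixed_side_tour qs_between.mixed_side_tour[OF swap_qs] by auto
qed

end

section \<open>Adjacency in the pyramidal tours polytope\<close>

lemma inj_charvec: "inj charvec"
proof (rule injI)
  fix S T :: "nat set set"
  assume "charvec S = charvec T"
  then have "(e \<in> S) = (e \<in> T)" for e
    unfolding charvec_def by (metis one_neq_zero)
  then show "S = T"
    by blast
qed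

lemma sum_charvec: "finite A \<Longrightarrow> (\<Sum>e\<in>A. charvec T e) = real (card (A \<inter> T))"
  unfolding charvec_def using sum.inter_restrict[of A "\<lambda>_. 1::real" T] by simp

lemma card_Int_minus_card_Int:
  assumes "finite G" "A \<subseteq> G" "T \<subseteq> G"
  shows "real (card (A \<inter> T)) - real (card ((G - B) \<inter> T)) \<le> real (card A)"
    and "real (card (A \<inter> T)) - real (card ((G - B) \<inter> T)) = real (card A) \<longleftrightarrow> A \<subseteq> T \<and> T \<subseteq> B"
proof -
  have "finite A"
    using assms(1,2) finite_subset by blast
  then have "card (A \<inter> T) \<le> card A" "card (A \<inter> T) = card A \<longleftrightarrow> A \<subseteq> T"
    by (auto simp: card_mono Int_absorb2 dest: card_subset_eq[OF _ Int_lower1])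
  moreover have "card ((G - B) \<inter> T) = 0 \<longleftrightarrow> T \<subseteq> B"
    using assms(1,3) by auto
  ultimately show "real (card (A \<inter> T)) - real (card ((G - B) \<inter> T)) \<le> real (card A)"
    and "real (card (A \<inter> T)) - real (card ((G - B) \<inter> T)) = real (card A) \<longleftrightarrow> A \<subseteq> T \<and> T \<subseteq> B"
    by linarith+
qed

text \<open>The functional counts the edges of \<open>x \<inter> y\<close> used minus the edges outside \<open>x \<union> y\<close> used;
  on \<open>charvec ` P\<close> it is maximal exactly at the tours between \<open>x\<close> and \<open>y\<close>.\<close>

lemma face_of_convex_hull_charvec_pair:
  assumes "finite G" "\<And>T. T \<in> P \<Longrightarrow> T \<subseteq> G" "finite P" "x \<in> P" "y \<in> P"
    and between: "\<And>T. T \<in> P \<Longrightarrow> x \<inter> y \<subseteq> T \<Longrightarrow> T \<subseteq> x \<union> y \<Longrightarrow> T = x \<or> T = y"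
  shows "convex hull {charvec x, charvec y} face_of convex hull (charvec ` P)"
proof -
  define \<phi> where "\<phi> f = (\<Sum>e\<in>x \<inter> y. f e) - (\<Sum>e\<in>G - (x \<union> y). f e)" for f :: "nat set \<Rightarrow> real"
  have "linear \<phi>"
    unfolding \<phi>_def
    by (rule linearI) (simp_all add: sum.distrib scaleR_fun_def sum_distrib_left right_diff_distrib)
  have "x \<inter> y \<subseteq> G"
    using assms(2,4) by blast
  then have \<phi>: "\<phi> (charvec T) \<le> real (card (x \<inter> y))"
    "\<phi> (charvec T) = real (card (x \<inter> y)) \<longleftrightarrow> x \<inter> y \<subseteq> T \<and> T \<subseteq> x \<union> y" if "T \<in> P" for T
    using card_Int_minus_card_Int[OF assms(1) _ assms(2)[OF that]] assms(1)
    unfolding \<phi>_def by (simp_all add: sum_charvec finite_subset)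
  have level_set: "{v \<in> charvec ` P. \<phi> v = real (card (x \<inter> y))} = {charvec x, charvec y}"
  proof (intro set_eqI iffI)
    fix v assume "v \<in> {v \<in> charvec ` P. \<phi> v = real (card (x \<inter> y))}"
    then obtain T where "T \<in> P" "v = charvec T" "\<phi> (charvec T) = real (card (x \<inter> y))"
      by blast
    then show "v \<in> {charvec x, charvec y}"
      using \<phi>(2) between by blast
  qed (use \<phi>(2) assms(4,5) in auto)
  have "convex hull {v \<in> charvec ` P. \<phi> v = real (card (x \<inter> y))} face_of convex hull (charvec ` P)"
    by (rule face_of_convex_hull_linear_level[OF finite_imageI[OF assms(3)] \<open>linear \<phi>\<close>])
      (use \<phi>(1) in blast)
  then show ?thesis
    unfolding level_set .
qed

lemma charvec_PT_extreme_point: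
  assumes "x \<in> PT n"
  shows "charvec x extreme_point_of PYR n"
proof -
  have "convex hull {charvec x, charvec x} face_of PYR n"
    unfolding PYR_def
    by (rule face_of_convex_hull_charvec_pair[OF finite_Kn_edges PT_subset_Kn_edges finite_PT assms assms])
      auto
  then show ?thesis
    by (simp add: face_of_singleton)
qed

lemma skel_adjacent_PYR:
  assumes "x \<in> PT n" "y \<in> PT n" "x \<noteq> y"
    and "\<And>T. T \<in> PT n \<Longrightarrow> x \<inter> y \<subseteq> T \<Longrightarrow> T \<subseteq> x \<union> y \<Longrightarrow> T = x \<or> T = y"
  shows "skel_adjacent (PYR n) (charvec x) (charvec y)"
proof -
  have "closed_segment (charvec x) (charvec y) face_of PYR n"
    unfolding PYR_def segment_convex_hull
    using face_of_convex_hull_charvec_pair[OF finite_Kn_edges PT_subset_Kn_edges finite_PT assms(1,2,4)] .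
  moreover have "charvec x \<noteq> charvec y"
    using assms(3) inj_charvec by (auto dest: injD)
  ultimately show ?thesis
    unfolding skel_adjacent_def vertices_of_def using charvec_PT_extreme_point assms(1,2) by simp
qed

lemma card_le_clique_number_PYR:
  assumes "finite C" "skel_clique (PYR n) C"
  shows "card C \<le> clique_number (PYR n)"
proof -
  have vertices: "vertices_of (PYR n) \<subseteq> charvec ` PT n"
    unfolding vertices_of_def PYR_def using extreme_point_of_convex_hull by blast
  have "card D \<le> card (charvec ` PT n)" if "skel_clique (PYR n) D" for D
  proof (rule card_mono)
    show "D \<subseteq> charvec ` PT n"
      using that vertices unfolding skel_clique_def by blast
  qed (simp add: finite_PT)
  then have "{card D | D. finite D \<and> skel_clique (PYR n) D} \<subseteq> {..card (charvec ` PT n)}"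
    by auto
  then have "finite {card D | D. finite D \<and> skel_clique (PYR n) D}"
    by (rule finite_subset) simp
  then show ?thesis
    unfolding clique_number_def by (rule Max_ge) (use assms in blast)
qed

context qs_tours
begin

lemma tour_of_code_qs: "tour_of_code n (code_qs m q s) = side_tour n (qs_side n m q s)"
  unfolding qs_side_def using tour_of_code_eq_side_tour n_large by simp

lemma tour_of_code_qs_inj:
  assumes "q \<le> m" "s \<le> m" "q' \<le> m" "s' \<le> m"
    and "tour_of_code n (code_qs m q s) = tour_of_code n (code_qs m q' s')"
  shows "q = q' \<and> s = s'"
proof -
  have "{left_end q, right_start m s} \<in> side_tour n (qs_side n m q' s')"
    using assms(5) jump_edge_mem[OF assms(1,2)] by (simp add: tour_of_code_qs)
  then show ?thesis
    using jump_edge_iff[OF assms(1-4)] by simp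
qed

lemma PT_between_qs_tours:
  assumes "q \<le> m" "s \<le> m" "q' \<le> m" "s' \<le> m" "T \<in> PT n"
    and "tour_of_code n (code_qs m q s) \<inter> tour_of_code n (code_qs m q' s') \<subseteq> T"
    and "T \<subseteq> tour_of_code n (code_qs m q s) \<union> tour_of_code n (code_qs m q' s')"
  shows "T = tour_of_code n (code_qs m q s) \<or> T = tour_of_code n (code_qs m q' s')"
proof -
  obtain I where "2 \<in> I" "T = side_tour n I"
    using PT_imp_side_tour[OF assms(5)] by blast
  then interpret qs_between n m I q s q' s'
    by (intro qs_between.intro qs_tours_axioms tour_between.intro qs_between_axioms.intro)
      (use assms(1-4,6,7) in \<open>simp_all add: tour_of_code_qs\<close>)
  show ?thesis
    using side_tour_cases \<open>T = side_tour n I\<close> by (simp add: tour_of_code_qs)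
qed

end

lemma (in qs_tours) skel_adjacent_qs_tours:
  assumes "q \<le> m" "s \<le> m" "q' \<le> m" "s' \<le> m"
    and "tour_of_code n (code_qs m q s) \<noteq> tour_of_code n (code_qs m q' s')"
  shows "skel_adjacent (PYR n) (charvec (tour_of_code n (code_qs m q s))) (charvec (tour_of_code n (code_qs m q' s')))"
  by (rule skel_adjacent_PYR) (use assms PT_between_qs_tours tour_of_code_in_PT n_large in auto)

definition qs_tour_family :: "nat \<Rightarrow> nat \<Rightarrow> nat set set set" where
  "qs_tour_family n m = (\<lambda>(q, s). tour_of_code n (code_qs m q s)) ` ({..m} \<times> {..m})"

lemma qs_tour_family_subset_PT: "3 \<le> n \<Longrightarrow> qs_tour_family n m \<subseteq> PT n"
  unfolding qs_tour_family_def using tour_of_code_in_PT by auto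

lemma card_qs_tour_family:
  assumes "4 * m + 3 \<le> n"
  shows "card (qs_tour_family n m) = (m + 1)^2"
proof -
  have "inj_on (\<lambda>(q, s). tour_of_code n (code_qs m q s)) ({..m} \<times> {..m})"
  proof (cases "m = 0")
    case False
    then interpret qs_tours n m
      using assms by unfold_locales simp_all
    show ?thesis
      using tour_of_code_qs_inj by (auto intro!: inj_onI)
  qed simp
  then show ?thesis
    unfolding qs_tour_family_def by (simp add: card_image power2_eq_square)
qed

lemma qs_tour_family_pairwise_adjacent:
  assumes "4 * m + 3 \<le> n" "x \<in> qs_tour_family n m" "y \<in> qs_tour_family n m" "x \<noteq> y"
  shows "skel_adjacent (PYR n) (charvec x) (charvec y)"
proof (cases "m = 0")
  case False
  then interpret qs_tours n m
    using assms(1) by unfold_locales simp_all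
  obtain q s q' s' where "q \<le> m" "s \<le> m" "q' \<le> m" "s' \<le> m"
    and "x = tour_of_code n (code_qs m q s)" "y = tour_of_code n (code_qs m q' s')"
    using assms(2,3) unfolding qs_tour_family_def by auto
  with assms(4) show ?thesis
    using skel_adjacent_qs_tours by blast
qed (use assms in \<open>simp add: qs_tour_family_def\<close>)

lemma card_le_clique_number_if_pairwise_adjacent:
  assumes "finite Z" "Z \<subseteq> PT n"
    and "\<And>x y. x \<in> Z \<Longrightarrow> y \<in> Z \<Longrightarrow> x \<noteq> y \<Longrightarrow> skel_adjacent (PYR n) (charvec x) (charvec y)"
  shows "card Z \<le> clique_number (PYR n)"
proof -
  have "skel_clique (PYR n) (charvec ` Z)"
    unfolding skel_clique_def vertices_of_def using assms(2,3) charvec_PT_extreme_point by auto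
  moreover have "card (charvec ` Z) = card Z"
    using inj_charvec by (simp add: card_image inj_on_subset)
  ultimately show ?thesis
    using card_le_clique_number_PYR[of "charvec ` Z"] assms(1) by simp
qed

theorem mainTheorem8:
  fixes n :: nat
  assumes "n \<ge> 4"
  defines "m \<equiv> (n - 3) div 4"
  defines "Z \<equiv> {tour_of_code n (code_qs m q s) | q s. q \<le> m \<and> s \<le> m}"
  shows "Z \<subseteq> PT n \<and> card Z = (m + 1)^2 \<and>
         (\<forall>x\<in>Z. \<forall>y\<in>Z. x \<noteq> y \<longrightarrow> skel_adjacent (PYR n) (charvec x) (charvec y)) \<and>
         clique_number (PYR n) \<ge> (m + 1)^2"
proof -
  have n: "4 * m + 3 \<le> n"
    unfolding m_def using assms(1) by linarith
  have Z: "Z = qs_tour_family n m"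
    unfolding Z_def qs_tour_family_def by auto
  have "finite Z"
    unfolding Z qs_tour_family_def by simp
  then show ?thesis
    using n qs_tour_family_subset_PT card_qs_tour_family qs_tour_family_pairwise_adjacent
      card_le_clique_number_if_pairwise_adjacent[of Z n]
    unfolding Z by auto
qed

end
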